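(* For $\alpha,\alpha'\in\mathbb R/2\pi\mathbb Z$, the maps $\mathbb Z[i]\to\mathbb Z[i]$, $z\mapsto[ze^{i\alpha}]$ and $z\mapsto[ze^{i\alpha'}]$, are equal if and only if $\alpha=\alpha'$.
   Context: Identify $\mathbb Z^2$ with $\mathbb Z[i]$. For real $x$, $[x]=\lfloor x+\tfrac12\rfloor$, and for $w\in\mathbb C$, $[w]=[\Re w]+i[\Im w]$; the map $z\mapsto[ze^{i\alpha}]$ is the discretized rotation of angle $\alpha$. *)

theory Defs
  imports "HOL-Analysis.Analysis"
begin

definition rnd :: "real \<Rightarrow> int" where
  "rnd x = \<lfloor>x + 1/2\<rfloor>"

definition crnd :: "complex \<Rightarrow> complex" where
  "crnd w = Complex (of_int (rnd (Re w))) (of_int (rnd (Im w)))"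

definition gauss_ints :: "complex set" where
  "gauss_ints = {z. Re z \<in> \<int> \<and> Im z \<in> \<int>}"

definition drot :: "real \<Rightarrow> complex \<Rightarrow> complex" where
  "drot \<alpha> z = crnd (z * cis \<alpha>)"

end

theory Submission
  imports Defs
begin

text \<open>Rounding moves each coordinate by at most 1/2, so on the points n \<in> \<nat> of \<int>[i] the
  discretized rotations of angles \<alpha> and \<alpha>' differ from n e^(i\<alpha>) and n e^(i\<alpha>') by a bounded
  amount. If the two maps agree, n (e^(i\<alpha>) - e^(i\<alpha>')) stays bounded for all n, which by the
  Archimedean property forces e^(i\<alpha>) = e^(i\<alpha>').\<close>

lemma rnd_eq_imp_dist_lt_1: "rnd x = rnd y \<Longrightarrow> \<bar>x - y\<bar> < 1"
  unfolding rnd_def by linarith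

lemma eq_if_multiples_close:
  fixes a b :: "'a::archimedean_field"
  assumes close: "\<And>n. \<bar>of_nat n * a - of_nat n * b\<bar> < 1"
  shows "a = b"
proof (rule ccontr)
  assume "a \<noteq> b"
  then obtain n where "1 < of_nat n * \<bar>a - b\<bar>"
    using ex_less_of_nat_mult[of "\<bar>a - b\<bar>" 1] by auto
  moreover have "\<bar>of_nat n * a - of_nat n * b\<bar> = of_nat n * \<bar>a - b\<bar>"
    by (simp add: abs_mult right_diff_distrib[symmetric])
  ultimately show False
    using close[of n] by linarith
qed

lemma crnd_eq_iff: "crnd w = crnd w' \<longleftrightarrow> rnd (Re w) = rnd (Re w') \<and> rnd (Im w) = rnd (Im w')"
  unfolding crnd_def by (simp add: complex_eq_iff)

lemma eq_if_crnd_multiples_eq: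
  assumes "\<And>n::nat. crnd (of_nat n * w) = crnd (of_nat n * w')"
  shows "w = w'"
proof -
  have "rnd (real n * Re w) = rnd (real n * Re w') \<and> rnd (real n * Im w) = rnd (real n * Im w')"
    for n
    using assms[of n] by (simp add: crnd_eq_iff)
  then have "Re w = Re w'" and "Im w = Im w'"
    by (auto intro!: eq_if_multiples_close dest: rnd_eq_imp_dist_lt_1)
  then show ?thesis
    by (simp add: complex_eq_iff)
qed

lemma of_nat_in_gauss_ints: "of_nat n \<in> gauss_ints"
  unfolding gauss_ints_def by simp

lemma drot_eq_on_gauss_ints_iff_cis_eq:
  "(\<forall>z\<in>gauss_ints. drot \<alpha> z = drot \<alpha>' z) \<longleftrightarrow> cis \<alpha> = cis \<alpha>'"
proof
  assume "\<forall>z\<in>gauss_ints. drot \<alpha> z = drot \<alpha>' z"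
  then have "crnd (of_nat n * cis \<alpha>) = crnd (of_nat n * cis \<alpha>')" for n
    using of_nat_in_gauss_ints by (auto simp: drot_def)
  then show "cis \<alpha> = cis \<alpha>'"
    by (rule eq_if_crnd_multiples_eq)
qed (simp add: drot_def)

lemma cis_eq_cis_iff: "cis \<alpha> = cis \<alpha>' \<longleftrightarrow> (\<exists>k::int. \<alpha>' = \<alpha> + 2 * pi * of_int k)"
  using sin_cos_eq_iff[of \<alpha>' \<alpha>] by (auto simp: complex_eq_iff)

theorem mainTheorem9:
  fixes \<alpha> \<alpha>' :: real
  shows "(\<forall>z\<in>gauss_ints. drot \<alpha> z = drot \<alpha>' z) \<longleftrightarrow>
         (\<exists>k::int. \<alpha>' = \<alpha> + 2 * pi * of_int k)"
  by (simp only: drot_eq_on_gauss_ints_iff_cis_eq cis_eq_cis_iff)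

end
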